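(* Let $k\ge 3$ and $N\ge 1$ be integers, and let $A\subseteq\{1,\dots,N\}$ be a non-empty set containing no $k$AP. Let $E_N\subset[0,1]$ be the self-similar attractor of the iterated function system $\{f_j: j\in A\}$, where $f_j(x)=\frac{x}{12N}+\frac{6j}{12N}$, i.e. $E_N=\bigcap_{\ell\ge 1}\bigcup_{i_1,\dots,i_\ell\in A} f_{i_1}\circ\cdots\circ f_{i_\ell}([0,1])$. Then $\dim_H(E_N)=\frac{\log\#A}{\log(12N)}$, and $E_N$ $\varepsilon_N$-avoids $k$APs, where $\varepsilon_N=\frac{1}{12N}$.
   Context: A $k$-term arithmetic progression ($k$AP) is a set $P=\{x, x+\lambda, \dots, x+(k-1)\lambda\}\subset\mathbb{R}$ with $\lambda>0$, called the gap length of $P$. A set $E\subset\mathbb{R}$ $\varepsilon$-avoids $k$APs if for every $k$AP $P$ with gap length $\lambda$ one has $\sup_{p\in P}\inf_{x\in E}|x-p|\ge\varepsilon\lambda$. *)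

theory Defs
  imports "HOL-Analysis.Analysis"
begin

text \<open>Weight of a covering set: diam(U)^s, with the conventions diam(empty)^s = 0
  and d^0 = 1 for nonempty U (so that H^0 is the counting measure).\<close>
definition hweight :: "real \<Rightarrow> real set \<Rightarrow> real" where
  "hweight s U = (if U = {} then 0 else if s = 0 then 1 else diameter U powr s)"

definition hausdorff_pre :: "real \<Rightarrow> real \<Rightarrow> real set \<Rightarrow> ennreal" where
  "hausdorff_pre s \<delta> E =
     (INF U \<in> {U :: nat \<Rightarrow> real set. E \<subseteq> (\<Union>i. U i) \<and>
                 (\<forall>i. bounded (U i) \<and> diameter (U i) \<le> \<delta>)}.
        (\<Sum>i. ennreal (hweight s (U i))))"

definition hausdorff_measure :: "real \<Rightarrow> real set \<Rightarrow> ennreal" where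
  "hausdorff_measure s E = (SUP \<delta> \<in> {0<..}. hausdorff_pre s \<delta> E)"

definition hausdorff_dim :: "real set \<Rightarrow> ereal" where
  "hausdorff_dim E = Inf {ereal s | s. s \<ge> 0 \<and> hausdorff_measure s E = 0}"

definition kAP :: "nat \<Rightarrow> real \<Rightarrow> real \<Rightarrow> real set" where
  "kAP k x d = {x + real i * d | i. i < k}"

definition contains_kAP :: "nat \<Rightarrow> real set \<Rightarrow> bool" where
  "contains_kAP k S \<longleftrightarrow> (\<exists>x d. d > 0 \<and> kAP k x d \<subseteq> S)"

definition eps_avoids_kAP :: "nat \<Rightarrow> real \<Rightarrow> real set \<Rightarrow> bool" where
  "eps_avoids_kAP k \<epsilon> E \<longleftrightarrow>
     (\<forall>x d. d > 0 \<longrightarrow> (SUP p \<in> kAP k x d. infdist p E) \<ge> \<epsilon> * d)"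

definition ifs_map :: "nat \<Rightarrow> nat \<Rightarrow> real \<Rightarrow> real" where
  "ifs_map N j x = x / (12 * real N) + 6 * real j / (12 * real N)"

definition ifs_comp :: "nat \<Rightarrow> nat list \<Rightarrow> real \<Rightarrow> real" where
  "ifs_comp N is = foldr (\<lambda>j g. ifs_map N j \<circ> g) is id"

definition attractor :: "nat \<Rightarrow> nat set \<Rightarrow> real set" where
  "attractor N A = (\<Inter>l \<in> {1..}. \<Union>is \<in> {is. length is = l \<and> set is \<subseteq> A}.
                      ifs_comp N is ` {0..1})"

end

(*
  The maps f_j are similitudes of ratio r = 1/(12N), and distinct digits differ by at least 1,
  so distinct cylinders f_w([0,1]) of the same level l are at distance at least 5 r^l.

  Covering E by its #A^l cylinders of level l gives H^s(E) = 0 for every s above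
  s0 = log #A / log (12N).  Conversely a set of diameter about r^l meets E inside a single
  cylinder of level l; after passing to a finite subcover (E is compact and the cylinders are
  relatively open in E), counting extensions of words shows that every cover U_i of E by small
  sets has sum diam(U_i)^s0 >= 1/#A, so H^s(E) > 0 for s <= s0.

  If every term of a kAP with gap d lies within d/(12N) of E, look at the first digits j_i of
  nearby points of E.  If they all agree, zooming in by 12N gives the same configuration with
  gap 12N d.  Otherwise the numbers 6 j_i stay within distance d + 1/2 < 3/2 of an arithmetic
  progression, so the j_i form a kAP in A.  Hence d < r^n for all n, which is absurd.
*)
theory Submission
  imports Defs
begin

definition words :: "nat set \<Rightarrow> nat \<Rightarrow> nat list set" where
  "words A l = {w. length w = l \<and> set w \<subseteq> A}"

lemma finite_words: "finite A \<Longrightarrow> finite (words A l)"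
  unfolding words_def using finite_lists_length_eq[of A l] by (simp add: conj_commute)

lemma card_words: "finite A \<Longrightarrow> card (words A l) = card A ^ l"
  unfolding words_def using card_lists_length_eq[of A l] by (simp add: conj_commute)

lemma take_in_words: "w \<in> words A n \<Longrightarrow> l \<le> n \<Longrightarrow> take l w \<in> words A l"
  unfolding words_def by (auto dest: in_set_takeD)

lemma card_extensions_le:
  assumes "finite A" "length w \<le> L"
  shows "card {v \<in> words A L. take (length w) v = w} \<le> card A ^ (L - length w)"
proof -
  have "{v \<in> words A L. take (length w) v = w} \<subseteq> (\<lambda>u. w @ u) ` words A (L - length w)"
  proof
    fix v assume v: "v \<in> {v \<in> words A L. take (length w) v = w}"
    then have "v = w @ drop (length w) v"
      by (metis (mono_tags, lifting) append_take_drop_id mem_Collect_eq)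
    moreover have "drop (length w) v \<in> words A (L - length w)"
      using v unfolding words_def by (auto dest: in_set_dropD)
    ultimately show "v \<in> (\<lambda>u. w @ u) ` words A (L - length w)" by blast
  qed
  then have "card {v \<in> words A L. take (length w) v = w} \<le> card ((\<lambda>u. w @ u) ` words A (L - length w))"
    using assms by (intro card_mono finite_imageI finite_words)
  also have "\<dots> \<le> card (words A (L - length w))"
    using assms by (intro card_image_le finite_words)
  finally show ?thesis using assms by (simp add: card_words)
qed

lemma ifs_comp_Nil [simp]: "ifs_comp N [] = id"
  by (simp add: ifs_comp_def)

lemma ifs_comp_Cons [simp]: "ifs_comp N (j # w) = ifs_map N j \<circ> ifs_comp N w"
  by (simp add: ifs_comp_def)

lemma ifs_comp_append: "ifs_comp N (u @ v) = ifs_comp N u \<circ> ifs_comp N v"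
  by (induction u) auto

lemma ifs_map_eq: "ifs_map N j y = (y + 6 * real j) / (12 * real N)"
  by (simp add: ifs_map_def add_divide_distrib)

lemma ifs_comp_affine: "ifs_comp N w y = ifs_comp N w 0 + y / (12 * real N) ^ length w"
proof (induction w arbitrary: y)
  case (Cons j w)
  show ?case
    using Cons[of y] by (simp add: ifs_map_def add_divide_distrib divide_divide_eq_left mult_ac)
qed simp

definition cylinder :: "nat \<Rightarrow> nat list \<Rightarrow> real set" where
  "cylinder N w = ifs_comp N w ` {0..1}"

lemma mem_cylinder: "x \<in> cylinder N w \<longleftrightarrow> (\<exists>y\<in>{0..1}. x = ifs_comp N w y)"
  unfolding cylinder_def by auto

lemma abs_diff_ge_of_mem_intervals:
  fixes a b p q \<rho> c :: real
  assumes "a \<in> {p..p + \<rho>}" "b \<in> {q..q + \<rho>}" "c \<le> \<bar>p - q\<bar>"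
  shows "c - \<rho> \<le> \<bar>a - b\<bar>"
  using assms by (auto simp: abs_if split: if_splits)

lemma power_powr: "0 < x \<Longrightarrow> (x ^ n) powr s = (x powr s) ^ n" for x :: real
  by (simp add: powr_powr powr_power powr_realpow[symmetric] mult.commute)

lemma ex_power_between:
  fixes x d :: real
  assumes "0 < x" "x < 1" "0 < d" "d < 1"
  shows "\<exists>l. x ^ Suc l \<le> d \<and> d < x ^ l"
proof -
  obtain n where "x ^ n < d" using real_arch_pow_inv[OF assms(3,2)] by blast
  then obtain l where "\<forall>i\<le>l. \<not> x ^ i \<le> d" "x ^ Suc l \<le> d"
    using ex_least_nat_less[of "\<lambda>n. x ^ n \<le> d" n] assms(4) by auto
  then show ?thesis by (auto simp: not_le)
qed

lemma ennreal_le_suminfI: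
  assumes "\<And>i. 0 \<le> f i" "summable f \<Longrightarrow> c \<le> (\<Sum>i. f i)"
  shows "ennreal c \<le> (\<Sum>i. ennreal (f i))"
proof (cases "summable f")
  case True
  have "(\<Sum>i. ennreal (f i)) = ennreal (\<Sum>i. f i)" by (rule suminf_ennreal2[OF assms(1) True])
  then show ?thesis using assms(2)[OF True] by (simp add: ennreal_leI)
next
  case False
  have "(\<Sum>i. ennreal (f i)) = top" by (rule summable_iff_suminf_neq_top[OF assms(1) False])
  then show ?thesis by simp
qed

lemma hweight_nonneg: "0 \<le> hweight s U"
  by (simp add: hweight_def)

lemma diameter_powr_le_hweight:
  assumes "0 \<le> s" "s \<le> t" "bounded U" "diameter U \<le> 1"
  shows "diameter U powr t \<le> hweight s U"
proof (cases "U = {}")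
  case True then show ?thesis by (simp add: hweight_def)
next
  case False
  have "diameter U powr t \<le> diameter U powr s" if "0 < s"
    using assms that diameter_ge_0[OF assms(3)] by (intro powr_mono') auto
  moreover have "diameter U powr t \<le> 1"
    using assms diameter_ge_0[OF assms(3)] by (intro powr_le1) auto
  ultimately show ?thesis using False assms(1) by (auto simp: hweight_def)
qed

lemma hausdorff_pre_le_finite_cover:
  assumes "finite F" "E \<subseteq> \<Union>F" "\<And>U. U \<in> F \<Longrightarrow> bounded U \<and> diameter U \<le> \<delta>" "0 \<le> \<delta>"
  shows "hausdorff_pre s \<delta> E \<le> ennreal (\<Sum>U\<in>F. hweight s U)"
proof -
  obtain h where h: "bij_betw h {..<card F} F"
    using ex_bij_betw_nat_finite[OF assms(1)] by (auto simp: atLeast0LessThan)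
  define V where "V i = (if i < card F then h i else {})" for i
  have "E \<subseteq> (\<Union>i. V i)"
  proof
    fix x assume "x \<in> E"
    then obtain U where U: "U \<in> F" "x \<in> U" using assms(2) by blast
    then obtain i where "i < card F" "h i = U" using h by (metis bij_betw_iff_bijections lessThan_iff)
    then show "x \<in> (\<Union>i. V i)" using U unfolding V_def by (intro UN_I[of i]) auto
  qed
  moreover have "bounded (V i) \<and> diameter (V i) \<le> \<delta>" for i
    using assms(3,4) bij_betwE[OF h] unfolding V_def by auto
  ultimately have "hausdorff_pre s \<delta> E \<le> (\<Sum>i. ennreal (hweight s (V i)))"
    unfolding hausdorff_pre_def by (intro INF_lower) blast
  also have "\<dots> = (\<Sum>i<card F. ennreal (hweight s (V i)))"
    by (rule suminf_finite) (auto simp: V_def hweight_def)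
  also have "\<dots> = ennreal (\<Sum>i<card F. hweight s (h i))"
    by (simp add: V_def hweight_nonneg)
  also have "(\<Sum>i<card F. hweight s (h i)) = (\<Sum>U\<in>F. hweight s U)"
    by (rule sum.reindex_bij_betw[OF h])
  finally show ?thesis .
qed

lemma hausdorff_pre_0_ge_1:
  assumes "E \<noteq> {}"
  shows "1 \<le> hausdorff_pre 0 \<delta> E"
  unfolding hausdorff_pre_def
proof (rule INF_greatest)
  fix U :: "nat \<Rightarrow> real set" assume "U \<in> {U. E \<subseteq> (\<Union>i. U i) \<and> (\<forall>i. bounded (U i) \<and> diameter (U i) \<le> \<delta>)}"
  then obtain i where "U i \<noteq> {}" using assms by blast
  then have "ennreal (hweight 0 (U i)) = 1" by (simp add: hweight_def)
  moreover have "ennreal (hweight 0 (U i)) \<le> (\<Sum>j. ennreal (hweight 0 (U j)))"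
    using sum_le_suminf[OF summableI, of "{i}"] by simp
  ultimately show "1 \<le> (\<Sum>j. ennreal (hweight 0 (U j)))" by simp
qed

lemma hausdorff_dim_eqI:
  assumes "0 \<le> t"
    and zero: "\<And>s. t < s \<Longrightarrow> hausdorff_measure s E = 0"
    and nonzero: "\<And>s. 0 \<le> s \<Longrightarrow> s \<le> t \<Longrightarrow> hausdorff_measure s E \<noteq> 0"
  shows "hausdorff_dim E = ereal t"
  unfolding hausdorff_dim_def
proof (rule antisym)
  show "Inf {ereal s |s. 0 \<le> s \<and> hausdorff_measure s E = 0} \<le> ereal t"
  proof (rule dense_ge)
    fix y assume y: "ereal t < y"
    show "Inf {ereal s |s. 0 \<le> s \<and> hausdorff_measure s E = 0} \<le> y"
    proof (cases y)
      case (real s)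
      then have "ereal s \<in> {ereal s |s. 0 \<le> s \<and> hausdorff_measure s E = 0}"
        using y zero[of s] assms(1) by auto
      then show ?thesis using real by (simp add: Inf_lower)
    qed (use y in auto)
  qed
  show "ereal t \<le> Inf {ereal s |s. 0 \<le> s \<and> hausdorff_measure s E = 0}"
    using nonzero by (force intro!: Inf_greatest)
qed

definition approx_kAP :: "nat \<Rightarrow> real \<Rightarrow> (nat \<Rightarrow> real) \<Rightarrow> real \<Rightarrow> real \<Rightarrow> bool" where
  "approx_kAP k \<epsilon> e x d \<longleftrightarrow> (\<forall>i<k. \<bar>e i - (x + real i * d)\<bar> < \<epsilon> * d)"

lemma approx_kAP_cong:
  "(\<And>i. i < k \<Longrightarrow> e i = e' i) \<Longrightarrow> approx_kAP k \<epsilon> e x d \<longleftrightarrow> approx_kAP k \<epsilon> e' x d"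
  by (simp add: approx_kAP_def)

lemma approx_kAP_pos: "approx_kAP k \<epsilon> e x d \<Longrightarrow> 0 < k \<Longrightarrow> 0 < \<epsilon> * d"
  unfolding approx_kAP_def by (metis abs_ge_zero le_less_trans of_nat_0 mult_zero_left add_0_right)

lemma approx_kAP_affine:
  assumes "approx_kAP k \<epsilon> e x d" "0 < c"
  shows "approx_kAP k \<epsilon> (\<lambda>i. c * e i + b) (c * x + b) (c * d)"
  unfolding approx_kAP_def
proof (intro allI impI)
  fix i assume "i < k"
  then have "c * \<bar>e i - (x + real i * d)\<bar> < c * (\<epsilon> * d)"
    using assms unfolding approx_kAP_def by simp
  moreover have "c * e i + b - (c * x + b + real i * (c * d)) = c * (e i - (x + real i * d))"
    by (simp add: algebra_simps)
  ultimately show "\<bar>c * e i + b - (c * x + b + real i * (c * d))\<bar> < \<epsilon> * (c * d)"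
    using assms(2) by (simp add: abs_mult mult_ac)
qed

lemma approx_kAP_if_not_eps_avoids:
  fixes S :: "real set"
  assumes "closed S" "S \<noteq> {}" "0 < d"
    and less: "(SUP p \<in> kAP k x d. infdist p S) < \<epsilon> * d"
  obtains e where "\<And>i. i < k \<Longrightarrow> e i \<in> S" "approx_kAP k \<epsilon> e x d"
proof -
  have "\<forall>i. \<exists>y\<in>S. infdist (x + real i * d) S = dist (x + real i * d) y"
    using infdist_attains_inf[OF assms(1,2)] by blast
  then obtain e where e: "\<And>i. e i \<in> S" "\<And>i. infdist (x + real i * d) S = dist (x + real i * d) (e i)"
    by metis
  have "kAP k x d = (\<lambda>i. x + real i * d) ` {..<k}" unfolding kAP_def by auto
  then have bdd: "bdd_above ((\<lambda>p. infdist p S) ` kAP k x d)" by simp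
  have "approx_kAP k \<epsilon> e x d"
    unfolding approx_kAP_def
  proof (intro allI impI)
    fix i assume "i < k"
    then have "x + real i * d \<in> kAP k x d" unfolding kAP_def by blast
    then have "infdist (x + real i * d) S < \<epsilon> * d"
      using cSUP_upper[OF _ bdd] less by (meson le_less_trans)
    then show "\<bar>e i - (x + real i * d)\<bar> < \<epsilon> * d" using e(2)[of i] by (simp add: dist_real_def abs_minus_commute)
  qed
  then show ?thesis using e(1) that by blast
qed

lemma int_near_arith_prog_is_arith_prog:
  fixes f :: "nat \<Rightarrow> int"
  assumes near: "\<And>i. i < k \<Longrightarrow> \<bar>real_of_int (f i) - (x + real i * d)\<bar> < 1/4"
  shows "i < k \<Longrightarrow> f i = f 0 + int i * (f 1 - f 0)"
proof (induction i rule: less_induct)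
  case (less i)
  show ?case
  proof (cases "i < 2")
    case True then show ?thesis by (cases i) auto
  next
    case False
    then obtain l where i: "i = l + 2" by (metis add.commute le_add_diff_inverse not_less)
    have "\<bar>real_of_int (f j) - (x + real j * d)\<bar> < 1/4" if "j \<le> l + 2" for j
      using near less.prems i that by simp
    from this[of l] this[of "l+1"] this[of "l+2"]
    have "\<bar>real_of_int (f (l+2) - 2 * f (l+1) + f l)\<bar> < 1"
      unfolding abs_less_iff by (simp add: algebra_simps)
    then have "f (l+2) = 2 * f (l+1) - f l" by linarith
    then show ?thesis using less.IH[of l] less.IH[of "l+1"] less.prems i
      by (simp add: algebra_simps)
  qed
qed

lemma contains_kAP_of_int_arith_prog:
  fixes j :: "nat \<Rightarrow> nat"
  assumes "0 < c" "\<And>i. i < k \<Longrightarrow> int (j i) = int (j 0) + int i * c" "\<And>i. i < k \<Longrightarrow> j i \<in> A"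
  shows "contains_kAP k (real ` A)"
  unfolding contains_kAP_def
proof (intro exI conjI)
  show "0 < real_of_int c" using assms(1) by simp
  show "kAP k (real (j 0)) (real_of_int c) \<subseteq> real ` A"
  proof
    fix p assume "p \<in> kAP k (real (j 0)) (real_of_int c)"
    then obtain i where i: "i < k" "p = real (j 0) + real i * real_of_int c" unfolding kAP_def by blast
    have "real (j i) = real_of_int (int (j 0) + int i * c)"
      using assms(2)[OF i(1)] by (metis of_int_of_nat_eq)
    then have "p = real (j i)" using i(2) by simp
    then show "p \<in> real ` A" using assms(3)[OF i(1)] by blast
  qed
qed

section \<open>The attractor\<close>

locale ifs =
  fixes N :: nat and A :: "nat set"
  assumes N_ge_1: "1 \<le> N" and A_subset: "A \<subseteq> {1..N}" and A_nonempty: "A \<noteq> {}"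
begin

abbreviation E :: "real set" where "E \<equiv> attractor N A"
definition r :: real where "r = 1 / (12 * real N)"

lemma finite_A: "finite A"
  using A_subset finite_subset by blast

lemma r_pos: "0 < r" and r_le: "r \<le> 1/12"
  using N_ge_1 by (auto simp: r_def field_simps)

lemma ifs_map_eq_r: "ifs_map N j y = r * (y + 6 * real j)"
  by (simp add: ifs_map_eq r_def)

lemma ifs_comp_affine_r: "ifs_comp N w y = ifs_comp N w 0 + r ^ length w * y"
  using ifs_comp_affine[of N w y] by (simp add: r_def power_one_over)

lemma ifs_map_mem:
  assumes "y \<in> {0..1}"
  shows "ifs_map N j y \<in> {6 * real j * r .. 6 * real j * r + r}"
  using assms r_pos by (auto simp: ifs_map_eq_r algebra_simps mult_left_le)

lemma ifs_map_unit: "j \<in> A \<Longrightarrow> y \<in> {0..1} \<Longrightarrow> ifs_map N j y \<in> {0..1}"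
proof -
  assume j: "j \<in> A" and y: "y \<in> {0..1}"
  then have "6 * real j + 1 \<le> 12 * real N" using A_subset by auto
  then show ?thesis using y N_ge_1 by (auto simp: ifs_map_def field_simps)
qed

lemma ifs_comp_unit: "set w \<subseteq> A \<Longrightarrow> y \<in> {0..1} \<Longrightarrow> ifs_comp N w y \<in> {0..1}"
  by (induction w arbitrary: y) (auto intro: ifs_map_unit simp del: atLeastAtMost_iff)

text \<open>Distinct digits differ by at least \<open>1\<close>, so distinct first maps send \<open>[0,1]\<close> to
  intervals of length \<open>r\<close> whose left endpoints are \<open>6r\<close> apart.\<close>

lemma cylinder_separation:
  assumes "length u = length v" "u \<noteq> v" "set u \<subseteq> A" "set v \<subseteq> A" "y \<in> {0..1}" "z \<in> {0..1}"
  shows "5 * r ^ length u \<le> \<bar>ifs_comp N u y - ifs_comp N v z\<bar>"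
  using assms
proof (induction u arbitrary: v)
  case (Cons i u)
  then obtain j v' where v: "v = j # v'" by (cases v) auto
  have yu: "ifs_comp N u y \<in> {0..1}" and zv: "ifs_comp N v' z \<in> {0..1}"
    using ifs_comp_unit Cons.prems v by auto
  show ?case
  proof (cases "i = j")
    case True
    then have "5 * r ^ length u \<le> \<bar>ifs_comp N u y - ifs_comp N v' z\<bar>"
      using Cons v by auto
    moreover have "ifs_comp N (i # u) y - ifs_comp N v z = r * (ifs_comp N u y - ifs_comp N v' z)"
      using True v by (simp add: ifs_map_eq_r algebra_simps)
    ultimately show ?thesis using r_pos by (simp add: abs_mult)
  next
    case False
    have "1 \<le> \<bar>real i - real j\<bar>" using False by (cases "i < j") auto
    then have "6 * r * 1 \<le> 6 * r * \<bar>real i - real j\<bar>"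
      using r_pos by (intro mult_left_mono) auto
    moreover have "6 * real i * r - 6 * real j * r = 6 * r * (real i - real j)"
      by (simp add: algebra_simps)
    ultimately have gap: "6 * r \<le> \<bar>6 * real i * r - 6 * real j * r\<bar>"
      using r_pos by (simp add: abs_mult)
    have "5 * r \<le> \<bar>ifs_comp N (i # u) y - ifs_comp N v z\<bar>"
      using abs_diff_ge_of_mem_intervals[OF ifs_map_mem[OF yu, of i] ifs_map_mem[OF zv, of j] gap] v
      by simp
    moreover have "r ^ length u \<le> 1" using r_pos r_le by (intro power_le_one) auto
    then have "r ^ length (i # u) \<le> r" using r_pos by (simp add: mult_left_le)
    ultimately show ?thesis by linarith
  qed
qed simp

lemma cylinder_unique:
  assumes "x \<in> cylinder N v" "x \<in> cylinder N w" "v \<in> words A l" "w \<in> words A l"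
  shows "v = w"
proof (rule ccontr)
  assume "v \<noteq> w"
  obtain y z where "y \<in> {0..1}" "z \<in> {0..1}" "x = ifs_comp N v y" "x = ifs_comp N w z"
    using assms(1,2) by (auto simp: mem_cylinder)
  then have "5 * r ^ l \<le> 0"
    using cylinder_separation[of v w y z] \<open>v \<noteq> w\<close> assms(3,4) by (auto simp: words_def)
  then show False using zero_less_power[OF r_pos, of l] by linarith
qed

lemma cylinder_take: "x \<in> cylinder N w \<Longrightarrow> set w \<subseteq> A \<Longrightarrow> x \<in> cylinder N (take l w)"
proof -
  assume x: "x \<in> cylinder N w" and w: "set w \<subseteq> A"
  then obtain y where y: "y \<in> {0..1}" "x = ifs_comp N w y" by (auto simp: mem_cylinder)
  have "set (drop l w) \<subseteq> A" using w by (meson order_trans set_drop_subset)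
  then have "ifs_comp N (drop l w) y \<in> {0..1}" using y ifs_comp_unit by blast
  moreover have "x = ifs_comp N (take l w) (ifs_comp N (drop l w) y)"
    using y ifs_comp_append[of N "take l w" "drop l w"] by simp
  ultimately show ?thesis by (auto simp: mem_cylinder)
qed

lemma diameter_cylinder: "diameter (cylinder N w) \<le> r ^ length w"
proof (rule diameter_le)
  fix x y assume "x \<in> cylinder N w" "y \<in> cylinder N w"
  then obtain s t where "s \<in> {0..1}" "t \<in> {0..1}" "x = ifs_comp N w s" "y = ifs_comp N w t"
    by (auto simp: mem_cylinder)
  moreover have "x - y = r ^ length w * (s - t)" if "x = ifs_comp N w s" "y = ifs_comp N w t" for s t
    using that ifs_comp_affine_r[of w s] ifs_comp_affine_r[of w t] by (simp add: algebra_simps)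
  moreover have "r ^ length w * \<bar>s - t\<bar> \<le> r ^ length w" if "s \<in> {0..1}" "t \<in> {0..1}" for s t
    using that r_pos by (intro mult_left_le) auto
  ultimately show "norm (x - y) \<le> r ^ length w"
    using r_pos by (simp add: abs_mult)
qed (use r_pos in simp)

lemma compact_cylinder: "compact (cylinder N w)"
proof -
  have "continuous_on {0..1} (\<lambda>y. ifs_comp N w 0 + r ^ length w * y)"
    by (intro continuous_intros)
  moreover have "(\<lambda>y. ifs_comp N w 0 + r ^ length w * y) = ifs_comp N w"
    by (rule ext) (rule ifs_comp_affine_r[symmetric])
  ultimately show ?thesis
    unfolding cylinder_def by (metis compact_continuous_image compact_Icc)
qed

lemma mem_attractor_iff: "x \<in> E \<longleftrightarrow> (\<forall>l. \<exists>w\<in>words A l. x \<in> cylinder N w)"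
proof
  assume x: "x \<in> E"
  show "\<forall>l. \<exists>w\<in>words A l. x \<in> cylinder N w"
  proof
    fix l
    have "x \<in> (\<Union>w\<in>words A (Suc l). cylinder N w)"
      using INT_D[OF x[unfolded attractor_def], of "Suc l"] by (simp add: words_def cylinder_def)
    then obtain w where w: "w \<in> words A (Suc l)" "x \<in> cylinder N w" by blast
    then have "x \<in> cylinder N (take l w)" using cylinder_take by (simp add: words_def)
    then show "\<exists>w\<in>words A l. x \<in> cylinder N w" using take_in_words[OF w(1), of l] by auto
  qed
next
  assume H: "\<forall>l. \<exists>w\<in>words A l. x \<in> cylinder N w"
  show "x \<in> E" unfolding attractor_def
  proof (rule INT_I)
    fix l
    from H obtain w where "w \<in> words A l" "x \<in> cylinder N w" by blast
    then show "x \<in> (\<Union>w\<in>{w. length w = l \<and> set w \<subseteq> A}. ifs_comp N w ` {0..1})"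
      unfolding words_def cylinder_def by blast
  qed
qed

lemma attractor_subset_unit: "E \<subseteq> {0..1}"
proof
  fix x assume "x \<in> E"
  then obtain w where "w \<in> words A 0" "x \<in> cylinder N w" using mem_attractor_iff by blast
  moreover from this(1) have "w = []" by (simp add: words_def)
  ultimately show "x \<in> {0..1}" by (simp add: cylinder_def)
qed

lemma compact_attractor: "compact E"
proof -
  have "closed E" unfolding attractor_def
    by (intro closed_INT ballI compact_imp_closed compact_UN)
       (auto simp: finite_words[OF finite_A, unfolded words_def] compact_cylinder[unfolded cylinder_def])
  then show ?thesis
    using attractor_subset_unit by (meson bounded_closed_interval bounded_subset compact_eq_bounded_closed)
qed

text \<open>The fixed point \<open>p\<close> of a map \<open>f\<^sub>a\<close> lies in \<open>E\<close>, and so do its images under all words.\<close>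

lemma cylinder_meets_attractor:
  assumes w: "set w \<subseteq> A"
  shows "\<exists>x\<in>E. x \<in> cylinder N w"
proof -
  obtain a where a: "a \<in> A" using A_nonempty by blast
  define p where "p = 6 * real a / (12 * real N - 1)"
  have "real a \<le> real N" using a A_subset by auto
  then have p: "p \<in> {0..1}" unfolding p_def using N_ge_1 by (auto simp: field_simps)
  have "ifs_map N a p = p" unfolding ifs_map_def p_def using N_ge_1 by (simp add: field_simps)
  then have fix_rep: "ifs_comp N (replicate l a) p = p" for l
    by (induction l) auto
  have "ifs_comp N w p \<in> E" unfolding mem_attractor_iff
  proof
    fix l
    let ?v = "w @ replicate l a"
    have v: "?v \<in> words A (length ?v)" using w a by (auto simp: words_def)
    have "ifs_comp N w p \<in> cylinder N ?v"
      using p by (auto simp: mem_cylinder ifs_comp_append fix_rep intro!: bexI[of _ p])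
    then have "ifs_comp N w p \<in> cylinder N (take l ?v)"
      using cylinder_take[of _ ?v l] v unfolding words_def by blast
    moreover have "take l ?v \<in> words A l" using take_in_words[OF v, of l] by simp
    ultimately show "\<exists>v\<in>words A l. ifs_comp N w p \<in> cylinder N v" by blast
  qed
  moreover have "ifs_comp N w p \<in> cylinder N w" using p by (auto simp: mem_cylinder)
  ultimately show ?thesis by blast
qed

lemma attractor_nonempty: "E \<noteq> {}"
  using cylinder_meets_attractor[of "[]"] by auto

lemma attractor_first_digit:
  assumes x: "x \<in> E"
  shows "\<exists>j\<in>A. \<exists>y\<in>E. x = ifs_map N j y"
proof -
  obtain w1 where w1: "w1 \<in> words A 1" "x \<in> cylinder N w1"
    using x mem_attractor_iff by blast
  then obtain j where "w1 = [j]" by (auto simp: words_def length_Suc_conv)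
  with w1 have j: "[j] \<in> words A 1" "x \<in> cylinder N [j]" by auto
  define y where "y = 12 * real N * x - 6 * real j"
  have x_eq: "x = ifs_map N j y" using N_ge_1 unfolding y_def ifs_map_def by (simp add: field_simps)
  have "y \<in> E" unfolding mem_attractor_iff
  proof
    fix l
    obtain w where w: "w \<in> words A (Suc l)" "x \<in> cylinder N w" using mem_attractor_iff x by blast
    then obtain j' w' where w_eq: "w = j' # w'" by (cases w) (auto simp: words_def)
    have "[j'] = [j]"
      using cylinder_unique[OF cylinder_take[OF w(2), of 1] j(2) take_in_words[OF w(1)] j(1)]
        w w_eq by (auto simp: words_def)
    then obtain t where t: "t \<in> {0..1}" "x = ifs_map N j (ifs_comp N w' t)"
      using w(2) w_eq by (auto simp: mem_cylinder)
    have "y = ifs_comp N w' t" using t N_ge_1 unfolding y_def ifs_map_def by (simp add: field_simps)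
    then have "y \<in> cylinder N w'" using t(1) unfolding mem_cylinder by blast
    moreover have "w' \<in> words A l" using w(1) w_eq by (simp add: words_def)
    ultimately show "\<exists>w\<in>words A l. y \<in> cylinder N w" by blast
  qed
  moreover have "j \<in> A" using j(1) by (simp add: words_def)
  ultimately show ?thesis using x_eq by blast
qed

subsection \<open>Hausdorff dimension\<close>

abbreviation m :: real where "m \<equiv> real (card A)"

definition similarity_dim :: real where
  "similarity_dim = ln (real (card A)) / ln (12 * real N)"

lemma card_A_ge_1: "1 \<le> m"
  using finite_A A_nonempty by (simp add: Suc_leI card_gt_0_iff)

lemma similarity_dim_nonneg: "0 \<le> similarity_dim"
  using card_A_ge_1 N_ge_1 by (simp add: similarity_dim_def)

lemma r_powr_similarity_dim: "r powr similarity_dim = 1 / m"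
proof -
  have "ln r = - ln (12 * real N)" using N_ge_1 by (simp add: r_def ln_div)
  then have "r powr similarity_dim = exp (- ln m)"
    using r_pos N_ge_1 by (simp add: powr_def similarity_dim_def)
  also have "\<dots> = 1 / m" using card_A_ge_1 by (simp add: exp_minus inverse_eq_divide)
  finally show ?thesis .
qed

lemma hweight_cylinder_le: "0 \<le> s \<Longrightarrow> hweight s (cylinder N w) \<le> (r ^ length w) powr s"
  using r_pos diameter_cylinder[of w]
  by (auto simp: hweight_def cylinder_def intro!: powr_mono2 diameter_ge_0
      compact_imp_bounded compact_cylinder[unfolded cylinder_def])

lemma hausdorff_pre_attractor_le:
  assumes "0 \<le> s" "r ^ l \<le> \<delta>"
  shows "hausdorff_pre s \<delta> E \<le> ennreal ((m * r powr s) ^ l)"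
proof -
  have "E \<subseteq> \<Union> (cylinder N ` words A l)"
  proof
    fix x assume "x \<in> E"
    then obtain w where "w \<in> words A l" "x \<in> cylinder N w" using mem_attractor_iff by blast
    then show "x \<in> \<Union> (cylinder N ` words A l)" by blast
  qed
  moreover have "bounded U \<and> diameter U \<le> \<delta>" if U: "U \<in> cylinder N ` words A l" for U
  proof -
    obtain w where w: "w \<in> words A l" "U = cylinder N w" using U by blast
    then have "diameter U \<le> r ^ l" using diameter_cylinder[of w] by (simp add: words_def)
    then show ?thesis using w(2) assms(2) compact_cylinder compact_imp_bounded by auto
  qed
  moreover have "0 \<le> \<delta>" using assms(2) zero_less_power[OF r_pos, of l] by linarith
  ultimately have "hausdorff_pre s \<delta> E \<le> ennreal (\<Sum>U\<in>cylinder N ` words A l. hweight s U)"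
    using finite_words[OF finite_A] by (intro hausdorff_pre_le_finite_cover) auto
  also have "(\<Sum>U\<in>cylinder N ` words A l. hweight s U) \<le> (\<Sum>w\<in>words A l. hweight s (cylinder N w))"
    using sum_image_le[OF finite_words[OF finite_A], where g="hweight s" and f="cylinder N"]
    by (simp add: hweight_nonneg comp_def)
  also have "\<dots> \<le> (\<Sum>w\<in>words A l. (r ^ l) powr s)"
    using assms(1) hweight_cylinder_le by (intro sum_mono) (auto simp: words_def)
  also have "\<dots> = (m * r powr s) ^ l"
    using r_pos finite_A by (simp add: card_words power_powr power_mult_distrib)
  finally show ?thesis by (simp add: ennreal_leI)
qed

lemma hausdorff_measure_attractor_eq_0:
  assumes "similarity_dim < s"
  shows "hausdorff_measure s E = 0"
proof -
  have s: "0 \<le> s" using assms similarity_dim_nonneg by linarith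
  define q where "q = m * r powr s"
  have "r powr s < r powr similarity_dim" using r_pos r_le assms by (intro powr_less_mono') auto
  then have q: "0 \<le> q" "q < 1"
    using card_A_ge_1 r_powr_similarity_dim by (auto simp: q_def field_simps)
  have "hausdorff_pre s \<delta> E = 0" if "0 < \<delta>" for \<delta>
  proof -
    have "(\<lambda>l. r ^ l) \<longlonglongrightarrow> 0" using r_pos r_le by (intro LIMSEQ_power_zero) auto
    from order_tendstoD(2)[OF this that] have "eventually (\<lambda>l. r ^ l \<le> \<delta>) sequentially"
      by (rule eventually_mono) simp
    then have "eventually (\<lambda>l. hausdorff_pre s \<delta> E \<le> ennreal (q ^ l)) sequentially"
      by (rule eventually_mono) (use hausdorff_pre_attractor_le[OF s] in \<open>simp add: q_def\<close>)
    moreover have "(\<lambda>l. ennreal (q ^ l)) \<longlonglongrightarrow> 0"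
      using q by (simp add: ennreal_tendsto_0_iff LIMSEQ_power_zero)
    ultimately have "hausdorff_pre s \<delta> E \<le> 0"
      by (intro tendsto_le[OF trivial_limit_sequentially]) auto
    then show ?thesis by simp
  qed
  then show ?thesis by (simp add: hausdorff_measure_def)
qed

lemma small_set_in_cylinder:
  assumes "bounded U" "diameter U < 5 * r ^ l"
  shows "\<exists>w\<in>words A l. E \<inter> U \<subseteq> cylinder N w"
proof (cases "E \<inter> U = {}")
  case True
  obtain a where "a \<in> A" using A_nonempty by blast
  then have "replicate l a \<in> words A l" by (simp add: words_def set_replicate_conv_if)
  with True show ?thesis by blast
next
  case False
  then obtain x0 where x0: "x0 \<in> E" "x0 \<in> U" by blast
  then obtain w where w: "w \<in> words A l" "x0 \<in> cylinder N w" using mem_attractor_iff by blast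
  have "x \<in> cylinder N w" if x: "x \<in> E" "x \<in> U" for x
  proof (rule ccontr)
    assume x_notin: "x \<notin> cylinder N w"
    obtain v where v: "v \<in> words A l" "x \<in> cylinder N v" using mem_attractor_iff x(1) by blast
    obtain s t where st: "s \<in> {0..1}" "t \<in> {0..1}" "x0 = ifs_comp N w s" "x = ifs_comp N v t"
      using w(2) v(2) by (auto simp: mem_cylinder)
    have "v \<noteq> w" using v x_notin by blast
    then have "5 * r ^ l \<le> dist x0 x"
      using cylinder_separation[of w v s t] st w(1) v(1)
      by (simp add: words_def dist_real_def)
    moreover have "dist x0 x \<le> diameter U" using diameter_bounded_bound[OF assms(1) x0(2) x(2)] .
    ultimately show False using assms(2) by linarith
  qed
  then show ?thesis using w(1) by blast
qed

lemma cylinder_open_nbhd: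
  assumes w: "set w \<subseteq> A"
  obtains W where "open W" "cylinder N w \<subseteq> W" "E \<inter> W \<subseteq> cylinder N w"
proof
  let ?a = "ifs_comp N w 0" and ?l = "length w"
  have rl: "0 < r ^ ?l" using r_pos by simp
  show "open {?a - r ^ ?l <..< ?a + 2 * r ^ ?l}" by simp
  show "cylinder N w \<subseteq> {?a - r ^ ?l <..< ?a + 2 * r ^ ?l}"
  proof
    fix x assume "x \<in> cylinder N w"
    then obtain t where t: "t \<in> {0..1}" "x = ifs_comp N w t" by (auto simp: mem_cylinder)
    then have "x = ?a + r ^ ?l * t" using ifs_comp_affine_r[of w t] by simp
    moreover have "r ^ ?l * t \<le> r ^ ?l" using rl t(1) by (simp add: mult_left_le)
    moreover have "0 \<le> r ^ ?l * t" using rl t(1) by simp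
    ultimately have "?a - r ^ ?l < x" "x < ?a + 2 * r ^ ?l" using rl by linarith+
    then show "x \<in> {?a - r ^ ?l <..< ?a + 2 * r ^ ?l}" by simp
  qed
  show "E \<inter> {?a - r ^ ?l <..< ?a + 2 * r ^ ?l} \<subseteq> cylinder N w"
  proof
    fix x assume x: "x \<in> E \<inter> {?a - r ^ ?l <..< ?a + 2 * r ^ ?l}"
    then obtain v where v: "v \<in> words A ?l" "x \<in> cylinder N v" using mem_attractor_iff by blast
    then obtain t where t: "t \<in> {0..1}" "x = ifs_comp N v t" by (auto simp: mem_cylinder)
    have "v = w"
    proof (rule ccontr)
      assume "v \<noteq> w"
      then have "5 * r ^ ?l \<le> \<bar>?a - x\<bar>"
        using cylinder_separation[of w v 0 t] t v w by (simp add: words_def)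
      then show False using x rl by auto
    qed
    then show "x \<in> cylinder N w" using v by simp
  qed
qed

lemma prefix_in_cylinder_cover:
  assumes cover: "E \<subseteq> (\<Union>i\<in>J. cylinder N (w i))" and w: "\<And>i. i \<in> J \<Longrightarrow> set (w i) \<subseteq> A"
    and L: "\<And>i. i \<in> J \<Longrightarrow> length (w i) \<le> L" and v: "v \<in> words A L"
  shows "\<exists>i\<in>J. take (length (w i)) v = w i"
proof -
  obtain x where x: "x \<in> E" "x \<in> cylinder N v"
    using cylinder_meets_attractor v by (auto simp: words_def)
  then obtain i where i: "i \<in> J" "x \<in> cylinder N (w i)" using cover by blast
  have "x \<in> cylinder N (take (length (w i)) v)"
    using cylinder_take x(2) v by (simp add: words_def)
  moreover have "take (length (w i)) v \<in> words A (length (w i))"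
    using take_in_words[OF v L[OF i(1)]] .
  moreover have "w i \<in> words A (length (w i))" using w[OF i(1)] by (simp add: words_def)
  ultimately show ?thesis using cylinder_unique i by blast
qed

text \<open>A Kraft-type inequality: every word of length \<open>L\<close> extends one of the covering words,
  and a word of length \<open>n\<close> has at most \<open>#A\<^sup>L\<^sup>-\<^sup>n\<close> extensions of length \<open>L\<close>.\<close>

lemma cylinder_cover_weight:
  assumes J: "finite J" and w: "\<And>i. i \<in> J \<Longrightarrow> set (w i) \<subseteq> A"
    and cover: "E \<subseteq> (\<Union>i\<in>J. cylinder N (w i))"
  shows "1 \<le> (\<Sum>i\<in>J. (1 / m) ^ length (w i))"
proof -
  have "J \<noteq> {}" using cover attractor_nonempty by auto
  define L where "L = Max ((\<lambda>i. length (w i)) ` J)"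
  have L: "length (w i) \<le> L" if "i \<in> J" for i unfolding L_def using J that by simp
  define S where "S i = {v \<in> words A L. take (length (w i)) v = w i}" for i
  have cover_words: "words A L \<subseteq> (\<Union>i\<in>J. S i)"
    using prefix_in_cylinder_cover[OF cover w L] unfolding S_def by blast
  have "finite (\<Union>i\<in>J. S i)"
    using finite_words[OF finite_A] by (rule finite_subset[rotated]) (auto simp: S_def)
  then have "card A ^ L \<le> card (\<Union>i\<in>J. S i)"
    using card_mono[OF _ cover_words] by (simp add: card_words[OF finite_A])
  also have "\<dots> \<le> (\<Sum>i\<in>J. card (S i))" by (rule card_UN_le[OF J])
  also have "\<dots> \<le> (\<Sum>i\<in>J. card A ^ (L - length (w i)))"
    unfolding S_def using finite_A L by (intro sum_mono card_extensions_le)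
  finally have "real (card A ^ L) \<le> real (\<Sum>i\<in>J. card A ^ (L - length (w i)))"
    by (simp only: of_nat_le_iff)
  then have "m ^ L \<le> (\<Sum>i\<in>J. m ^ (L - length (w i)))" by simp
  also have "\<dots> = (\<Sum>i\<in>J. m ^ L * (1 / m) ^ length (w i))"
    using card_A_ge_1 L by (intro sum.cong) (simp_all add: power_diff power_one_over)
  also have "\<dots> = m ^ L * (\<Sum>i\<in>J. (1 / m) ^ length (w i))" by (simp add: sum_distrib_left)
  finally show ?thesis using card_A_ge_1 by simp
qed

lemma cylinder_covering_small_set:
  assumes m2: "2 \<le> card A" and U: "bounded U" "diameter U \<le> r" and g: "0 < g"
  obtains w where "set w \<subseteq> A" "E \<inter> U \<subseteq> cylinder N w"
    "(1 / m) ^ length w \<le> m * diameter U powr similarity_dim + g"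
proof (cases "diameter U = 0")
  case True
  have "1 / m < 1" using m2 by simp
  then obtain l where l: "(1 / m) ^ l < g" using real_arch_pow_inv[OF g] by blast
  have "diameter U < 5 * r ^ l" using True r_pos by simp
  then obtain w where w: "w \<in> words A l" "E \<inter> U \<subseteq> cylinder N w"
    using small_set_in_cylinder[OF U(1)] by blast
  then show ?thesis using that[of w] l True by (simp add: words_def)
next
  case False
  then have d: "0 < diameter U" "diameter U < 1" using diameter_ge_0[OF U(1)] U(2) r_le by auto
  obtain l where l: "r ^ Suc l \<le> diameter U" "diameter U < r ^ l"
    using ex_power_between[OF r_pos _ d] r_le by auto
  have "diameter U < 5 * r ^ l" using l(2) zero_less_power[OF r_pos, of l] by linarith
  then obtain w where w: "w \<in> words A l" "E \<inter> U \<subseteq> cylinder N w"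
    using small_set_in_cylinder[OF U(1)] by blast
  have "(r ^ Suc l) powr similarity_dim = (1 / m) ^ Suc l"
    by (simp only: power_powr[OF r_pos] r_powr_similarity_dim)
  then have "(1 / m) ^ l = m * (r ^ Suc l) powr similarity_dim" using card_A_ge_1 by simp
  also have "\<dots> \<le> m * diameter U powr similarity_dim"
    using l(1) r_pos similarity_dim_nonneg by (intro mult_left_mono powr_mono2) auto
  finally show ?thesis using that[of w] w g by (simp add: words_def)
qed

text \<open>A cover of \<open>E\<close> by small sets is refined to a finite cover by cylinders: compactness of \<open>E\<close>
  applies because each cylinder is relatively open in \<open>E\<close>.\<close>

lemma attractor_cylinder_refinement:
  assumes m2: "2 \<le> card A" and U: "\<And>i. bounded (U i)" "\<And>i. diameter (U i) \<le> r"
    and cover: "E \<subseteq> (\<Union>i. U i)" and g: "\<And>i. 0 < g i"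
  shows "\<exists>J w. finite J \<and> E \<subseteq> (\<Union>i\<in>J. cylinder N (w i)) \<and> (\<forall>i. set (w i) \<subseteq> A \<and>
           (1 / m) ^ length (w i) \<le> m * diameter (U i) powr similarity_dim + g i)"
proof -
  have "\<forall>i. \<exists>w. set w \<subseteq> A \<and> E \<inter> U i \<subseteq> cylinder N w \<and>
      (1 / m) ^ length w \<le> m * diameter (U i) powr similarity_dim + g i"
  proof
    fix i
    obtain w where "set w \<subseteq> A" "E \<inter> U i \<subseteq> cylinder N w"
      "(1 / m) ^ length w \<le> m * diameter (U i) powr similarity_dim + g i"
      by (rule cylinder_covering_small_set[OF m2 U(1) U(2) g])
    then show "\<exists>w. set w \<subseteq> A \<and> E \<inter> U i \<subseteq> cylinder N w \<and>
        (1 / m) ^ length w \<le> m * diameter (U i) powr similarity_dim + g i" by blast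
  qed
  from choice[OF this] obtain w where w: "\<forall>i. set (w i) \<subseteq> A \<and> E \<inter> U i \<subseteq> cylinder N (w i) \<and>
      (1 / m) ^ length (w i) \<le> m * diameter (U i) powr similarity_dim + g i" by blast
  then have w_A: "\<And>i. set (w i) \<subseteq> A" and w_U: "\<And>i. E \<inter> U i \<subseteq> cylinder N (w i)" by simp_all
  have "\<forall>i. \<exists>W. open W \<and> cylinder N (w i) \<subseteq> W \<and> E \<inter> W \<subseteq> cylinder N (w i)"
  proof
    fix i
    obtain W where "open W" "cylinder N (w i) \<subseteq> W" "E \<inter> W \<subseteq> cylinder N (w i)"
      by (rule cylinder_open_nbhd[OF w_A])
    then show "\<exists>W. open W \<and> cylinder N (w i) \<subseteq> W \<and> E \<inter> W \<subseteq> cylinder N (w i)" by blast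
  qed
  from choice[OF this] obtain W where
    "\<forall>i. open (W i) \<and> cylinder N (w i) \<subseteq> W i \<and> E \<inter> W i \<subseteq> cylinder N (w i)" by blast
  then have W_open: "\<And>i. open (W i)" and W_cyl: "\<And>i. cylinder N (w i) \<subseteq> W i"
    and W_E: "\<And>i. E \<inter> W i \<subseteq> cylinder N (w i)" by simp_all
  have "E \<subseteq> (\<Union>i\<in>UNIV. W i)"
  proof
    fix x assume x: "x \<in> E"
    then obtain i where "x \<in> U i" using cover by blast
    then have "x \<in> W i" using w_U W_cyl x by blast
    then show "x \<in> (\<Union>i\<in>UNIV. W i)" by blast
  qed
  then obtain J where J: "J \<subseteq> UNIV" "finite J" "E \<subseteq> (\<Union>i\<in>J. W i)"
    by (rule compactE_image[OF compact_attractor W_open])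
  then have "E \<subseteq> (\<Union>i\<in>J. cylinder N (w i))" using W_E by blast
  then show ?thesis using J(2) w by blast
qed

lemma suminf_diameter_powr_ge:
  assumes m2: "2 \<le> card A" and U: "\<And>i. bounded (U i)" "\<And>i. diameter (U i) \<le> r"
    and cover: "E \<subseteq> (\<Union>i. U i)" and sf: "summable (\<lambda>i. diameter (U i) powr similarity_dim)"
  shows "1 / m \<le> (\<Sum>i. diameter (U i) powr similarity_dim)"
proof -
  define f where "f i = diameter (U i) powr similarity_dim" for i
  have "1 \<le> m * (\<Sum>i. f i) + e" if e: "0 < e" for e
  proof -
    define g where "g i = e * (1 / 2) ^ Suc i" for i
    have g: "0 < g i" for i unfolding g_def using e by simp
    have g_sums: "g sums e" unfolding g_def using sums_mult[OF power_half_series, of e] by simp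
    obtain J w where J: "finite J" "E \<subseteq> (\<Union>i\<in>J. cylinder N (w i))"
      and w: "\<forall>i. set (w i) \<subseteq> A \<and> (1 / m) ^ length (w i) \<le> m * f i + g i"
      using attractor_cylinder_refinement[where U=U and g=g, OF m2 U cover g] unfolding f_def
      by blast
    then have w_A: "\<And>i. set (w i) \<subseteq> A" and w_weight: "\<And>i. (1 / m) ^ length (w i) \<le> m * f i + g i"
      by simp_all
    have "1 \<le> (\<Sum>i\<in>J. (1 / m) ^ length (w i))" by (rule cylinder_cover_weight[OF J(1) w_A J(2)])
    also have "\<dots> \<le> (\<Sum>i\<in>J. m * f i + g i)" using w_weight by (rule sum_mono)
    also have "\<dots> = m * (\<Sum>i\<in>J. f i) + (\<Sum>i\<in>J. g i)"
      by (simp add: sum.distrib sum_distrib_left)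
    also have "(\<Sum>i\<in>J. f i) \<le> (\<Sum>i. f i)"
      using sf J(1) unfolding f_def by (intro sum_le_suminf) auto
    also have "(\<Sum>i\<in>J. g i) \<le> (\<Sum>i. g i)"
      using g by (intro sum_le_suminf[OF sums_summable[OF g_sums] J(1)]) (auto intro: less_imp_le)
    also have "(\<Sum>i. g i) = e" using sums_unique[OF g_sums] by simp
    finally show ?thesis using card_A_ge_1 by simp
  qed
  then have "1 \<le> m * (\<Sum>i. f i)" by (rule field_le_epsilon)
  then show ?thesis using card_A_ge_1 unfolding f_def by (simp add: field_simps)
qed

lemma hausdorff_pre_attractor_ge:
  assumes "0 \<le> s" "s \<le> similarity_dim"
  shows "ennreal (1 / m) \<le> hausdorff_pre s r E"
proof (cases "s = 0")
  case True
  have "ennreal (1 / m) \<le> 1" using card_A_ge_1 by (simp add: ennreal_leI)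
  then show ?thesis using True hausdorff_pre_0_ge_1[OF attractor_nonempty] by (metis order_trans)
next
  case False
  then have "0 < ln m / ln (12 * real N)" using assms by (simp add: similarity_dim_def)
  then have "0 < ln m" using N_ge_1 by (simp add: zero_less_divide_iff)
  then have "1 < m" using card_A_ge_1 by (simp add: ln_gt_zero_iff)
  then have m2: "2 \<le> card A" by simp
  show ?thesis unfolding hausdorff_pre_def
  proof (rule INF_greatest)
    fix U :: "nat \<Rightarrow> real set"
    assume "U \<in> {U. E \<subseteq> (\<Union>i. U i) \<and> (\<forall>i. bounded (U i) \<and> diameter (U i) \<le> r)}"
    then have U: "\<And>i. bounded (U i)" "\<And>i. diameter (U i) \<le> r" "E \<subseteq> (\<Union>i. U i)" by auto
    have "ennreal (1 / m) \<le> (\<Sum>i. ennreal (diameter (U i) powr similarity_dim))"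
      by (rule ennreal_le_suminfI) (use suminf_diameter_powr_ge[OF m2 U] in auto)
    also have "\<dots> \<le> (\<Sum>i. ennreal (hweight s (U i)))"
    proof (intro suminf_le ennreal_leI)
      show "diameter (U i) powr similarity_dim \<le> hweight s (U i)" for i
        using diameter_powr_le_hweight[OF assms U(1)] U(2)[of i] r_le by simp
    qed (rule summableI)+
    finally show "ennreal (1 / m) \<le> (\<Sum>i. ennreal (hweight s (U i)))" .
  qed
qed

lemma hausdorff_measure_attractor_ne_0:
  assumes "0 \<le> s" "s \<le> similarity_dim"
  shows "hausdorff_measure s E \<noteq> 0"
proof -
  have "hausdorff_pre s r E \<le> hausdorff_measure s E"
    unfolding hausdorff_measure_def using r_pos by (intro SUP_upper) auto
  moreover have "0 < ennreal (1 / m)" using card_A_ge_1 by simp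
  ultimately show ?thesis using hausdorff_pre_attractor_ge[OF assms] by (metis leD order_trans)
qed

lemma hausdorff_dim_attractor: "hausdorff_dim E = ereal similarity_dim"
  using similarity_dim_nonneg hausdorff_measure_attractor_eq_0 hausdorff_measure_attractor_ne_0
  by (rule hausdorff_dim_eqI)

subsection \<open>Avoidance of progressions\<close>

lemma attractor_first_digits:
  assumes "\<And>i. i < k \<Longrightarrow> e i \<in> E"
  shows "\<exists>j y. \<forall>i<k. j i \<in> A \<and> y i \<in> E \<and> e i = ifs_map N (j i) (y i)"
proof -
  have "\<forall>i. \<exists>j' y'. i < k \<longrightarrow> j' \<in> A \<and> y' \<in> E \<and> e i = ifs_map N j' y'"
    using attractor_first_digit assms by metis
  then show ?thesis by metis
qed

lemma scaled_digit_bounds: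
  assumes y: "y \<in> {0..1}" and near: "\<bar>ifs_map N j y - p\<bar> < r * d"
  shows "- d - 1 < 6 * real j - 12 * real N * p" "6 * real j - 12 * real N * p < d"
proof -
  have "ifs_map N j y - p = r * (y + 6 * real j - 12 * real N * p)"
    using N_ge_1 by (simp add: ifs_map_eq_r r_def algebra_simps)
  then have "r * \<bar>y + 6 * real j - 12 * real N * p\<bar> < r * d" using near r_pos by (simp add: abs_mult)
  then have "\<bar>y + 6 * real j - 12 * real N * p\<bar> < d" using r_pos by simp
  then show "- d - 1 < 6 * real j - 12 * real N * p" "6 * real j - 12 * real N * p < d"
    using y by auto
qed

text \<open>Enlarged by \<open>12N\<close>, a point \<open>f\<^sub>j(y)\<close> becomes \<open>6j + y\<close> with \<open>y \<in> [0,1]\<close>, so the numbers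
  \<open>6 j\<^sub>i\<close> follow the enlarged progression up to an error in \<open>(-d-1, d)\<close>.\<close>

lemma first_digits_near_arith_prog:
  assumes "\<And>i. i < k \<Longrightarrow> y i \<in> {0..1}" and "approx_kAP k r (\<lambda>i. ifs_map N (j i) (y i)) x d"
    and "i < k"
  shows "- d - 1 < 6 * real (j i) - 12 * real N * x - real i * (12 * real N * d)"
    and "6 * real (j i) - 12 * real N * x - real i * (12 * real N * d) < d"
  using scaled_digit_bounds[of "y i" "j i" "x + real i * d" d] assms
  by (auto simp: approx_kAP_def algebra_simps)

lemma first_digits_gap_lt_1:
  assumes k: "2 \<le> k" and j: "\<And>i. i < k \<Longrightarrow> j i \<in> A" and y: "\<And>i. i < k \<Longrightarrow> y i \<in> {0..1}"
    and near: "approx_kAP k r (\<lambda>i. ifs_map N (j i) (y i)) x d"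
  shows "d < 1"
proof (rule ccontr)
  assume "\<not> d < 1"
  have "(12 * real N - 2) * 1 \<le> (12 * real N - 2) * d"
    using \<open>\<not> d < 1\<close> N_ge_1 by (intro mult_left_mono) auto
  moreover have "real (j 1) \<le> real N" "1 \<le> real (j 0)" using j[of 0] j[of 1] k A_subset by auto
  ultimately show False
    using first_digits_near_arith_prog[OF y near, of 0] first_digits_near_arith_prog[OF y near, of 1] k
    by (simp add: algebra_simps)
qed

lemma first_digits_arith_prog:
  assumes k: "2 \<le> k" and j: "\<And>i. i < k \<Longrightarrow> j i \<in> A" and y: "\<And>i. i < k \<Longrightarrow> y i \<in> {0..1}"
    and near: "approx_kAP k r (\<lambda>i. ifs_map N (j i) (y i)) x d"
  shows "\<exists>c\<ge>0. \<forall>i<k. int (j i) = int (j 0) + int i * c"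
proof (intro exI conjI allI impI)
  define X D where "X = 12 * real N * x" and "D = 12 * real N * d"
  have d: "d < 1" by (rule first_digits_gap_lt_1[OF k j y near])
  have "0 < d" using approx_kAP_pos[OF near] k r_pos by (simp add: zero_less_mult_iff)
  have "\<bar>real_of_int (int (j i)) - ((X - 1/2) / 6 + real i * (D / 6))\<bar> < 1/4" if "i < k" for i
    using first_digits_near_arith_prog[OF y near that] d unfolding X_def D_def
    by (simp add: abs_less_iff field_simps)
  then show "int (j i) = int (j 0) + int i * (int (j 1) - int (j 0))" if "i < k" for i
    using int_near_arith_prog_is_arith_prog[of k "\<lambda>i. int (j i)"] that by blast
  have "6 * real (j 0) - X < d"
    using first_digits_near_arith_prog(2)[OF y near, of 0] k by (simp add: X_def)
  moreover have "- d - 1 < 6 * real (j 1) - X - D"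
    using first_digits_near_arith_prog(1)[OF y near, of 1] k by (simp add: X_def D_def)
  moreover have "2 * d \<le> D" using \<open>0 < d\<close> N_ge_1 by (simp add: D_def)
  ultimately have "real (j 0) < real (Suc (j 1))" by simp
  then show "0 \<le> int (j 1) - int (j 0)" by (simp only: of_nat_less_iff)
qed

text \<open>Either the first digits of the points of \<open>E\<close> differ, and then they form a forbidden
  progression, or they agree and the configuration can be enlarged by the factor \<open>12N\<close>.\<close>

lemma attractor_approx_kAP_zoom:
  assumes k: "3 \<le> k" and no_kAP: "\<not> contains_kAP k (real ` A)"
    and e: "\<And>i. i < k \<Longrightarrow> e i \<in> E" and near: "approx_kAP k r e x d"
  shows "d < 1 \<and> (\<exists>e' x'. (\<forall>i<k. e' i \<in> E) \<and> approx_kAP k r e' x' (12 * real N * d))"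
proof -
  obtain j y where "\<forall>i<k. j i \<in> A \<and> y i \<in> E \<and> e i = ifs_map N (j i) (y i)"
    using attractor_first_digits[of k e, OF e] by blast
  then have j: "\<And>i. i < k \<Longrightarrow> j i \<in> A" and y: "\<And>i. i < k \<Longrightarrow> y i \<in> E"
    and e_eq: "\<And>i. i < k \<Longrightarrow> e i = ifs_map N (j i) (y i)" by simp_all
  have "approx_kAP k r e x d = approx_kAP k r (\<lambda>i. ifs_map N (j i) (y i)) x d"
    by (rule approx_kAP_cong) (simp add: e_eq)
  then have near_digits: "approx_kAP k r (\<lambda>i. ifs_map N (j i) (y i)) x d" using near by simp
  have y01: "\<And>i. i < k \<Longrightarrow> y i \<in> {0..1}" using y attractor_subset_unit by blast
  have "d < 1" using first_digits_gap_lt_1[where k=k and j=j and y=y, OF _ j y01 near_digits] k by simp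
  obtain c where c: "0 \<le> c" "\<forall>i<k. int (j i) = int (j 0) + int i * c"
    using first_digits_arith_prog[where k=k and j=j and y=y, OF _ j y01 near_digits] k by auto
  then have j_lin: "\<And>i. i < k \<Longrightarrow> int (j i) = int (j 0) + int i * c" by blast
  have "c = 0"
  proof (rule ccontr)
    assume "c \<noteq> 0"
    then have "0 < c" using c(1) by simp
    then show False using contains_kAP_of_int_arith_prog[of c k j A, OF _ j_lin j] no_kAP by blast
  qed
  then have "y i = 12 * real N * e i + - 6 * real (j 0)" if "i < k" for i
    using e_eq[OF that] j_lin[OF that] N_ge_1 by (simp add: ifs_map_def field_simps)
  then have "approx_kAP k r y (12 * real N * x + - 6 * real (j 0)) (12 * real N * d) =
      approx_kAP k r (\<lambda>i. 12 * real N * e i + - 6 * real (j 0)) (12 * real N * x + - 6 * real (j 0))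
        (12 * real N * d)"
    by (rule approx_kAP_cong)
  moreover have "approx_kAP k r (\<lambda>i. 12 * real N * e i + - 6 * real (j 0))
      (12 * real N * x + - 6 * real (j 0)) (12 * real N * d)"
    using approx_kAP_affine[OF near, of "12 * real N" "- 6 * real (j 0)"] N_ge_1 by simp
  ultimately have "approx_kAP k r y (12 * real N * x + - 6 * real (j 0)) (12 * real N * d)"
    by simp
  then show ?thesis using \<open>d < 1\<close> y by blast
qed

lemma attractor_approx_kAP_gap_lt_power:
  assumes "3 \<le> k" "\<not> contains_kAP k (real ` A)"
  shows "(\<And>i. i < k \<Longrightarrow> e i \<in> E) \<Longrightarrow> approx_kAP k r e x d \<Longrightarrow> d < r ^ n"
proof (induction n arbitrary: e x d)
  case (0 e x d)
  then show ?case using attractor_approx_kAP_zoom[OF assms, where e=e and x=x and d=d] by simp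
next
  case (Suc n e x d)
  then obtain e' x' where "\<forall>i<k. e' i \<in> E" "approx_kAP k r e' x' (12 * real N * d)"
    using attractor_approx_kAP_zoom[OF assms, where e=e and x=x and d=d] by blast
  then have "12 * real N * d < r ^ n" using Suc.IH[of e' x' "12 * real N * d"] by blast
  then show ?case using N_ge_1 by (simp add: r_def field_simps)
qed

lemma attractor_eps_avoids_kAP:
  assumes "3 \<le> k" "\<not> contains_kAP k (real ` A)"
  shows "eps_avoids_kAP k r E"
  unfolding eps_avoids_kAP_def
proof (intro allI impI)
  fix x d :: real assume d: "0 < d"
  show "r * d \<le> (SUP p\<in>kAP k x d. infdist p E)"
  proof (rule ccontr)
    assume "\<not> r * d \<le> (SUP p\<in>kAP k x d. infdist p E)"
    then have "(SUP p\<in>kAP k x d. infdist p E) < r * d" by simp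
    then obtain e where e: "\<And>i. i < k \<Longrightarrow> e i \<in> E" "approx_kAP k r e x d"
      by (rule approx_kAP_if_not_eps_avoids[OF compact_imp_closed[OF compact_attractor]
          attractor_nonempty d]) auto
    have "r < 1" using r_le by simp
    then obtain n where "r ^ n < d" using real_arch_pow_inv[OF d] by blast
    moreover have "d < r ^ n" by (rule attractor_approx_kAP_gap_lt_power[OF assms, where e=e, OF e])
    ultimately show False by simp
  qed
qed

end

theorem mainTheorem8:
  fixes k N :: nat and A :: "nat set"
  assumes "k \<ge> 3" and "N \<ge> 1"
    and "A \<subseteq> {1..N}" and "A \<noteq> {}"
    and "\<not> contains_kAP k (real ` A)"
  shows "hausdorff_dim (attractor N A) = ereal (ln (real (card A)) / ln (12 * real N))
       \<and> eps_avoids_kAP k (1 / (12 * real N)) (attractor N A)"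
proof -
  interpret ifs N A using assms(2-4) by unfold_locales
  show ?thesis
    using hausdorff_dim_attractor attractor_eps_avoids_kAP[OF assms(1,5)]
    by (simp add: similarity_dim_def r_def)
qed

end
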